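(* Let $A\in\mathbb{R}^{m\times n}$, $b\in\mathbb{R}^m$, $C\in\mathbb{R}^{p\times n}$, $d\in\mathbb{R}^p$ and let $\mathcal{Y}\subseteq\mathbb{R}^n$ be a polyhedral set, and assume the polyhedral set $\mathcal{X}^*=\{x\in\mathcal{Y}:Ax=b,\ Cx\le d\}$ is nonempty. Let $\delta\in(0,2)$, $\beta\in(0,2)$, $x_0\in\mathcal{Y}$, and let $x_k$ be generated by algorithm SSP-LS described in the context. Then for all $k\ge0$, $$\mathbb{E}[\mathrm{dist}^2(x_k,\mathcal{X}^* )]\le\Big(1-\frac1c\min\Big(\frac{\delta(2-\delta)}{2\kappa_{\mathrm{block}}^2},\ \frac{2-\delta}{4\delta},\ \frac{\beta(2-\beta)}{2}\Big)\Big)^k\mathrm{dist}^2(x_0,\mathcal{X}^* ).$$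
   Context: The rows of $A$ (with $b$) are partitioned into blocks $(A_\zeta^T,b_\zeta)$, $\zeta\in\Omega_1$, so $A_\zeta^T$ is a block of rows of $A$; the rows of $C$ (with $d$) are partitioned into blocks $(C_\xi^T,d_\xi)$, $\xi\in\Omega_2$. $\mathbf{P}_1$, $\mathbf{P}_2$ are probability distributions on the (finite) block index sets $\Omega_1$, $\Omega_2$. Define $\mathcal{A}_\zeta=\{x:A_\zeta^Tx=b_\zeta\}$ and $\mathcal{C}_\xi=\{x:C_\xi^Tx\le d_\xi\}$, so $\mathcal{X}^*=\mathcal{Y}\cap\bigcap_\zeta\mathcal{A}_\zeta\cap\bigcap_\xi\mathcal{C}_\xi$. $\Pi_S$ denotes Euclidean projection onto a closed convex set $S$, $\mathrm{dist}$ the Euclidean distance. The constant $c\in(0,\infty)$ is a Hoffman constant: $\mathrm{dist}^2(u,\mathcal{X}^* )\le c\,\mathbb{E}_{\zeta\sim\mathbf{P}_1,\xi\sim\mathbf{P}_2}[\mathrm{dist}^2(u,\mathcal{A}_\zeta)+\mathrm{dist}^2(u,\mathcal{C}_\xi)]$ for all $u\in\mathcal{Y}$ (such $c$ exists since $\mathcal{X}^*$ is a nonempty polyhedron). The maximum block condition number is $\kappa_{\mathrm{block}}=\max_{\zeta}\|A_\zeta^T\|\cdot\|(A_\zeta^T)^\dagger\|$, the maximum over blocks $\zeta$ in the support of $\mathbf{P}_1$, with $\dagger$ the Moore–Penrose pseudoinverse and $\|\cdot\|$ the spectral norm. Algorithm SSP-LS: for $k\ge0$, sample $\zeta_k\sim\mathbf{P}_1$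 and $\xi_k\sim\mathbf{P}_2$ independently of each other and of the past, and set $\alpha_k=\delta\frac{\|A_{\zeta_k}^Tx_k-b_{\zeta_k}\|^2}{\|A_{\zeta_k}(A_{\zeta_k}^Tx_k-b_{\zeta_k})\|^2}$ (with $0/0=0$), $v_k=x_k-\alpha_kA_{\zeta_k}(A_{\zeta_k}^Tx_k-b_{\zeta_k})$, $z_k=(1-\beta)v_k+\beta\Pi_{\mathcal{C}_{\xi_k}}(v_k)$, $x_{k+1}=\Pi_{\mathcal{Y}}(z_k)$. *)

theory Defs
  imports "HOL-Analysis.Analysis" "HOL-Probability.Probability"
begin

text \<open>Rows not belonging to block z are replaced by zero rows; this does not
  change the residual norm, the spectral norm or the pseudoinverse norm.\<close>

definition blk_mat :: "real^'n^'m \<Rightarrow> ('m \<Rightarrow> 'z) \<Rightarrow> 'z \<Rightarrow> real^'n^'m" where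
  "blk_mat A blk z = (\<chi> i. if blk i = z then A $ i else 0)"

definition blk_vec :: "real^'m \<Rightarrow> ('m \<Rightarrow> 'z) \<Rightarrow> 'z \<Rightarrow> real^'m" where
  "blk_vec b blk z = (\<chi> i. if blk i = z then b $ i else 0)"

definition pinv :: "real^'n^'m \<Rightarrow> real^'m^'n" where
  "pinv M = (THE P. M ** P ** M = M \<and> P ** M ** P = P \<and>
       transpose (M ** P) = M ** P \<and> transpose (P ** M) = P ** M)"

definition spec_norm :: "real^'n^'m \<Rightarrow> real" where
  "spec_norm M = onorm (\<lambda>x. M *v x)"

definition kappa_block :: "real^'n^'m \<Rightarrow> ('m \<Rightarrow> 'z::finite) \<Rightarrow> 'z pmf \<Rightarrow> real" where
  "kappa_block A blk P1 =
     Max ((\<lambda>z. spec_norm (blk_mat A blk z) * spec_norm (pinv (blk_mat A blk z))) ` set_pmf P1)"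

definition eq_set :: "real^'n^'m \<Rightarrow> real^'m \<Rightarrow> ('m \<Rightarrow> 'z) \<Rightarrow> 'z \<Rightarrow> (real^'n) set" where
  "eq_set A b blk z = {x. \<forall>i. blk i = z \<longrightarrow> A $ i \<bullet> x = b $ i}"

definition ineq_set :: "real^'n^'p \<Rightarrow> real^'p \<Rightarrow> ('p \<Rightarrow> 'w) \<Rightarrow> 'w \<Rightarrow> (real^'n) set" where
  "ineq_set C d blk w = {x. \<forall>i. blk i = w \<longrightarrow> C $ i \<bullet> x \<le> d $ i}"

definition sol_set :: "(real^'n) set \<Rightarrow> real^'n^'m \<Rightarrow> real^'m \<Rightarrow> real^'n^'p \<Rightarrow> real^'p \<Rightarrow> (real^'n) set" where
  "sol_set Y A b C d = {x \<in> Y. A *v x = b \<and> (\<forall>i. (C *v x) $ i \<le> d $ i)}"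

definition ssp_step ::
  "real \<Rightarrow> real \<Rightarrow> (real^'n) set \<Rightarrow> real^'n^'m \<Rightarrow> real^'m \<Rightarrow> ('m \<Rightarrow> 'z)
   \<Rightarrow> real^'n^'p \<Rightarrow> real^'p \<Rightarrow> ('p \<Rightarrow> 'w) \<Rightarrow> real^'n \<Rightarrow> 'z \<Rightarrow> 'w \<Rightarrow> real^'n" where
  "ssp_step \<delta> \<beta> Y A b blk1 C d blk2 x z w =
     (let r = blk_mat A blk1 z *v x - blk_vec b blk1 z;
          g = transpose (blk_mat A blk1 z) *v r;
          \<alpha> = \<delta> * (norm r)^2 / (norm g)^2;
          v = x - \<alpha> *\<^sub>R g;
          zz = (1 - \<beta>) *\<^sub>R v + \<beta> *\<^sub>R closest_point (ineq_set C d blk2 w) v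
      in closest_point Y zz)"

text \<open>Distribution of the iterate x_k (samples independent of each other and the past).\<close>
primrec ssp_dist ::
  "real \<Rightarrow> real \<Rightarrow> (real^'n) set \<Rightarrow> real^'n^'m \<Rightarrow> real^'m \<Rightarrow> ('m \<Rightarrow> 'z) \<Rightarrow> 'z pmf
   \<Rightarrow> real^'n^'p \<Rightarrow> real^'p \<Rightarrow> ('p \<Rightarrow> 'w) \<Rightarrow> 'w pmf \<Rightarrow> real^'n \<Rightarrow> nat \<Rightarrow> (real^'n) pmf" where
  "ssp_dist \<delta> \<beta> Y A b blk1 P1 C d blk2 P2 x0 0 = return_pmf x0"
| "ssp_dist \<delta> \<beta> Y A b blk1 P1 C d blk2 P2 x0 (Suc k) =
     bind_pmf (ssp_dist \<delta> \<beta> Y A b blk1 P1 C d blk2 P2 x0 k)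
       (\<lambda>x. map_pmf (\<lambda>(z, w). ssp_step \<delta> \<beta> Y A b blk1 C d blk2 x z w) (pair_pmf P1 P2))"

end

theory Submission
  imports Defs
begin

(* Let xs be the point of the solution set S nearest to x_k, write M for the sampled equality
   block, r = M x_k - b for its residual and g = M^T r. The iterate first takes a relaxed Polyak
   step along g, which lowers |x - xs|^2 by delta (2 - delta) |r|^4 / |g|^2; then a relaxed
   projection onto the sampled inequality block, which lowers it by beta (2 - beta) times the
   squared length of the projection step; the final projection onto Y cannot increase it. The
   pseudoinverse gives dist(x, A_zeta) <= |pinv M| |r| while |g| <= |M| |r|, so the first decrease
   dominates dist^2(x, A_zeta) / kappa^2, and the triangle inequality through the intermediate
   point bounds dist^2(x, C_xi) by the two decreases. Averaging over the blocks and invoking the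
   Hoffman bound contracts E dist^2(x_k, S) by the factor 1 - mu / c in every step. *)

section \<open>Orthogonal projections and the pseudoinverse\<close>

lemma inner_matrix_vector_transpose:
  "((M::real^'n^'m) *v x) \<bullet> y = x \<bullet> (transpose M *v y)"
  by (metis dot_lmul_matrix inner_commute transpose_matrix_vector)

lemma transpose_eq_self_if_self_adjoint:
  fixes X :: "real^'n^'n"
  assumes "\<And>y z. (X *v y) \<bullet> z = y \<bullet> (X *v z)"
  shows "transpose X = X"
proof -
  have "transpose X *v z = X *v z" for z
    using assms by (metis inner_commute inner_matrix_vector_transpose vector_eq_rdot)
  then show ?thesis by (simp add: matrix_eq)
qed

lemma orthogonal_projection_exists:
  fixes S :: "'a::euclidean_space set"
  assumes "subspace S"
  obtains Q where "linear Q" "\<And>x. Q x \<in> S" "\<And>x s. s \<in> S \<Longrightarrow> (x - Q x) \<bullet> s = 0"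
proof -
  obtain B where B: "B \<subseteq> S" "pairwise orthogonal B" "\<And>b. b \<in> B \<Longrightarrow> norm b = 1"
      "independent B" "span B = S"
    using orthonormal_basis_subspace[OF assms] by metis
  have fin: "finite B" using B(4) by (rule finiteI_independent)
  define Q where "Q x = (\<Sum>b\<in>B. (x \<bullet> b) *\<^sub>R b)" for x
  have "linear Q"
    by (rule linearI)
       (simp_all add: Q_def inner_add_left scaleR_add_left sum.distrib scaleR_sum_right)
  moreover have "Q x \<in> S" for x
    unfolding Q_def B(5)[symmetric] by (intro span_sum span_scale span_base)
  moreover have "(x - Q x) \<bullet> s = 0" if "s \<in> S" for x s
  proof -
    have "orthogonal (x - Q x) b" if b: "b \<in> B" for b
    proof -
      have bb: "b \<bullet> b = 1" using B(3)[OF b] by (simp add: norm_eq_1)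
      have "(\<Sum>b'\<in>B. (x \<bullet> b') * (b' \<bullet> b)) = x \<bullet> b"
        using fin b B(2) bb
        by (subst sum.remove[of B b]) (auto intro!: sum.neutral simp: pairwise_def orthogonal_def)
      then show ?thesis
        by (simp add: orthogonal_def Q_def inner_diff_left inner_sum_left)
    qed
    then show ?thesis
      using orthogonal_to_span[of s B "x - Q x"] that B(5) by (simp add: orthogonal_def)
  qed
  ultimately show ?thesis using that by blast
qed

lemma orthogonal_projection_fixes:
  fixes Q :: "'a::real_inner \<Rightarrow> 'a"
  assumes "subspace S" "\<And>x. Q x \<in> S" "\<And>x s. s \<in> S \<Longrightarrow> (x - Q x) \<bullet> s = 0" "s \<in> S"
  shows "Q s = s"
proof -
  have "s - Q s \<in> S" using assms by (simp add: subspace_diff)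
  then have "(s - Q s) \<bullet> (s - Q s) = 0" using assms(3) by blast
  then show ?thesis by simp
qed

lemma orthogonal_projection_self_adjoint:
  fixes Q :: "'a::real_inner \<Rightarrow> 'a"
  assumes "\<And>x. Q x \<in> S" "\<And>x s. s \<in> S \<Longrightarrow> (x - Q x) \<bullet> s = 0"
  shows "Q y \<bullet> z = y \<bullet> Q z"
proof -
  have "Q y \<bullet> z = Q y \<bullet> Q z + (z - Q z) \<bullet> Q y"
    by (simp add: inner_diff_left inner_diff_right inner_commute)
  also have "\<dots> = (y - Q y) \<bullet> Q z + Q y \<bullet> Q z" using assms by simp
  also have "\<dots> = y \<bullet> Q z" by (simp add: inner_diff_left)
  finally show ?thesis .
qed

definition is_pinv :: "real^'n^'m \<Rightarrow> real^'m^'n \<Rightarrow> bool" where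
  "is_pinv M P \<longleftrightarrow> M ** P ** M = M \<and> P ** M ** P = P \<and>
     transpose (M ** P) = M ** P \<and> transpose (P ** M) = P ** M"

lemma is_pinv_exists: "\<exists>P. is_pinv (M::real^'n^'m) P"
proof -
  \<comment> \<open>P is the inverse of M on the row space V, precomposed with the projection onto the
    column space W; then M P and P M are the orthogonal projections onto W and V.\<close>
  define V where "V = range (\<lambda>y. transpose M *v y)"
  define W where "W = range (\<lambda>x. M *v x)"
  have V: "subspace V" and W: "subspace W"
    unfolding V_def W_def by (intro linear_subspace_image subspace_UNIV matrix_vector_mul_linear)+
  obtain QV where QV: "linear QV" "\<And>x. QV x \<in> V" "\<And>x s. s \<in> V \<Longrightarrow> (x - QV x) \<bullet> s = 0"
    using orthogonal_projection_exists[OF V] by blast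
  obtain QW where QW: "linear QW" "\<And>x. QW x \<in> W" "\<And>x s. s \<in> W \<Longrightarrow> (x - QW x) \<bullet> s = 0"
    using orthogonal_projection_exists[OF W] by blast
  have M_QV: "M *v QV x = M *v x" for x
  proof -
    have "(M *v (x - QV x)) \<bullet> (M *v (x - QV x)) = 0"
      unfolding inner_matrix_vector_transpose using QV(3)[of "transpose M *v (M *v (x - QV x))" x]
      by (simp add: V_def)
    then show ?thesis by (simp add: matrix_vector_mult_diff_distrib)
  qed
  have "inj_on (\<lambda>x. M *v x) V"
  proof (rule inj_onI)
    fix u u' assume "u \<in> V" "u' \<in> V" and eq: "M *v u = M *v u'"
    then have "u - u' \<in> V" using V by (simp add: subspace_diff)
    then obtain t where t: "u - u' = transpose M *v t" unfolding V_def by blast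
    have "(u - u') \<bullet> (u - u') = (M *v (u - u')) \<bullet> t"
      by (simp only: inner_matrix_vector_transpose t)
    also have "\<dots> = 0" using eq by (simp add: matrix_vector_mult_diff_distrib)
    finally show "u = u'" by simp
  qed
  then obtain g where g: "range g \<subseteq> V" "linear g" "\<And>v. v \<in> V \<Longrightarrow> g (M *v v) = v"
    using linear_exists_left_inverse_on[OF matrix_vector_mul_linear V] by blast
  have g_M: "g (M *v x) = QV x" for x
    by (metis M_QV QV(2) g(3))
  define P where "P = matrix (g \<circ> QW)"
  have P: "P *v y = g (QW y)" for y
    unfolding P_def using g(2) QW(1) by (simp add: matrix_works linear_compose)
  have MP: "M *v (P *v y) = QW y" for y
  proof -
    obtain x where x: "QW y = M *v x" using QW(2)[of y] by (auto simp: W_def)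
    show ?thesis by (simp add: P x g_M M_QV)
  qed
  have PM: "P *v (M *v x) = QV x" for x
    using orthogonal_projection_fixes[OF W QW(2,3), of "M *v x"] by (simp add: P W_def g_M)
  have "M ** P ** M = M"
    by (simp add: matrix_eq PM M_QV flip: matrix_vector_mul_assoc)
  moreover have "P ** M ** P = P"
  proof -
    have "P *v y \<in> V" for y using g(1) by (auto simp: P)
    then show ?thesis
      by (simp add: matrix_eq PM orthogonal_projection_fixes[OF V QV(2,3)] flip: matrix_vector_mul_assoc)
  qed
  moreover have "transpose (M ** P) = M ** P"
    by (rule transpose_eq_self_if_self_adjoint)
       (simp add: MP orthogonal_projection_self_adjoint[OF QW(2,3)] flip: matrix_vector_mul_assoc)
  moreover have "transpose (P ** M) = P ** M"
    by (rule transpose_eq_self_if_self_adjoint)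
       (simp add: PM orthogonal_projection_self_adjoint[OF QV(2,3)] flip: matrix_vector_mul_assoc)
  ultimately show ?thesis unfolding is_pinv_def by blast
qed

lemma is_pinv_unique:
  fixes M :: "real^'n^'m"
  assumes "is_pinv M X" "is_pinv M Y"
  shows "X = Y"
proof -
  have a1: "M ** X ** M = M" and a2: "X ** M ** X = X" and a3: "transpose (M ** X) = M ** X"
    and a4: "transpose (X ** M) = X ** M" and b1: "M ** Y ** M = M" and b2: "Y ** M ** Y = Y"
    and b3: "transpose (M ** Y) = M ** Y" and b4: "transpose (Y ** M) = Y ** M"
    using assms unfolding is_pinv_def by blast+
  have tM1: "transpose M = transpose M ** (M ** Y)"
    by (metis b1 b3 matrix_transpose_mul)
  have tM2: "transpose M = (X ** M) ** transpose M"
    by (metis a1 a4 matrix_mul_assoc matrix_transpose_mul)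
  have tX: "M ** X = transpose X ** transpose M"
    by (metis a3 matrix_transpose_mul)
  have tY: "Y ** M = transpose M ** transpose Y"
    by (metis b4 matrix_transpose_mul)
  have "X = X ** (M ** X)" using a2 by (simp only: matrix_mul_assoc)
  also have "\<dots> = X ** (transpose X ** (transpose M ** (M ** Y)))" by (simp only: tX tM1[symmetric])
  also have "\<dots> = X ** ((transpose X ** transpose M) ** (M ** Y))" by (simp only: matrix_mul_assoc)
  also have "\<dots> = X ** ((M ** X) ** (M ** Y))" by (simp only: tX)
  also have "\<dots> = X ** M ** Y" by (simp only: matrix_mul_assoc a2)
  also have "\<dots> = X ** M ** (Y ** M ** Y)" by (simp only: b2)
  also have "\<dots> = (X ** M) ** (transpose M ** transpose Y) ** Y" by (simp only: tY matrix_mul_assoc)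
  also have "\<dots> = (((X ** M) ** transpose M) ** transpose Y) ** Y" by (simp only: matrix_mul_assoc)
  also have "\<dots> = Y" by (simp only: tM2[symmetric] tY[symmetric] b2)
  finally show ?thesis .
qed

lemma is_pinv_pinv: "is_pinv M (pinv M)"
proof -
  have "pinv M = (THE P. is_pinv M P)" by (simp add: pinv_def is_pinv_def)
  moreover have "\<exists>!P. is_pinv M P" using is_pinv_exists is_pinv_unique by blast
  ultimately show ?thesis by (simp add: theI')
qed

lemma inner_transpose_residual: "(transpose M *v (M *v u)) \<bullet> u = (norm ((M::real^'n^'m) *v u))^2"
proof -
  have "(transpose M *v (M *v u)) \<bullet> u = u \<bullet> (transpose M *v (M *v u))" by (rule inner_commute)
  also have "\<dots> = (M *v u) \<bullet> (M *v u)" by (rule inner_matrix_vector_transpose[symmetric])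
  finally show ?thesis by (simp add: power2_norm_eq_inner)
qed

lemma norm_transpose_mult_le: "norm (transpose M *v r) \<le> spec_norm (M::real^'n^'m) * norm r"
proof -
  let ?g = "transpose M *v r"
  have "(norm ?g)^2 = (M *v ?g) \<bullet> r"
    by (simp add: power2_norm_eq_inner inner_matrix_vector_transpose)
  also have "\<dots> \<le> norm (M *v ?g) * norm r" by (rule norm_cauchy_schwarz)
  also have "\<dots> \<le> spec_norm M * norm ?g * norm r"
    unfolding spec_norm_def by (intro mult_right_mono onorm) simp_all
  finally have "norm ?g * norm ?g \<le> norm ?g * (spec_norm M * norm r)"
    by (simp add: power2_eq_square algebra_simps)
  moreover have "0 \<le> spec_norm M" unfolding spec_norm_def by (intro onorm_pos_le) simp
  ultimately show ?thesis
    by (cases "?g = 0") (simp_all add: mult_le_cancel_left_pos)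
qed

lemma infdist_solution_set_le_pinv:
  fixes M :: "real^'n^'m"
  shows "infdist x {y. M *v y = M *v xs} \<le> spec_norm (pinv M) * norm (M *v (x - xs))"
proof -
  let ?y = "x - pinv M *v (M *v (x - xs))"
  have "M *v ?y = M *v x - (M ** pinv M ** M) *v (x - xs)"
    by (simp add: matrix_vector_mult_diff_distrib flip: matrix_vector_mul_assoc)
  also have "\<dots> = M *v xs"
    using is_pinv_pinv[of M] by (simp add: is_pinv_def matrix_vector_mult_diff_distrib)
  finally have "infdist x {y. M *v y = M *v xs} \<le> norm (pinv M *v (M *v (x - xs)))"
    using infdist_le[of ?y _ x] by (simp add: dist_norm)
  also have "\<dots> \<le> spec_norm (pinv M) * norm (M *v (x - xs))"
    unfolding spec_norm_def by (rule onorm) simp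
  finally show ?thesis .
qed

lemma infdist_solution_set_sq_le:
  fixes M :: "real^'n^'m" and x xs :: "real^'n"
  defines "r \<equiv> M *v (x - xs)"
  defines "g \<equiv> transpose M *v r"
  shows "(infdist x {y. M *v y = M *v xs})^2
    \<le> (spec_norm M * spec_norm (pinv M))^2 * ((norm r)^2)^2 / (norm g)^2"
proof (cases "g = 0")
  case True
  then have "r = 0" using inner_transpose_residual[of M "x - xs"] by (simp add: g_def r_def)
  then have "infdist x {y. M *v y = M *v xs} = 0"
    using infdist_solution_set_le_pinv[where M=M and x=x and xs=xs] infdist_nonneg[of x]
    by (simp add: r_def order_antisym)
  then show ?thesis by simp
next
  case False
  let ?dA = "infdist x {y. M *v y = M *v xs}"
  have "0 \<le> spec_norm M" "0 \<le> spec_norm (pinv M)"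
    unfolding spec_norm_def by (intro onorm_pos_le, simp)+
  then have "?dA^2 * (norm g)^2 \<le> (spec_norm (pinv M) * norm r)^2 * (spec_norm M * norm r)^2"
    using infdist_solution_set_le_pinv[where M=M and x=x and xs=xs] norm_transpose_mult_le[of M r]
      infdist_nonneg[of x]
    by (intro mult_mono power_mono) (auto simp: r_def g_def)
  then show ?thesis
    using False by (simp add: field_simps power_mult_distrib power2_eq_square)
qed

section \<open>One step of SSP-LS\<close>

lemma eq_set_blk: "eq_set A b blk z = {x. blk_mat A blk z *v x = blk_vec b blk z}"
  by (auto simp: eq_set_def blk_mat_def blk_vec_def vec_eq_iff matrix_vector_mul_component)

lemma blk_vec_solution: "A *v xs = b \<Longrightarrow> blk_vec b blk z = blk_mat A blk z *v xs"
  by (auto simp: vec_eq_iff blk_vec_def blk_mat_def matrix_vector_mul_component)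

lemma closed_convex_ineq_set: "closed (ineq_set C d blk w)" "convex (ineq_set C d blk w)"
proof -
  have "ineq_set C d blk w = (\<Inter>i\<in>{i. blk i = w}. {x. C $ i \<bullet> x \<le> d $ i})"
    by (auto simp: ineq_set_def)
  then show "closed (ineq_set C d blk w)" "convex (ineq_set C d blk w)"
    by (auto intro!: convex_INT closed_halfspace_le convex_halfspace_le)
qed

lemma closed_sol_set:
  assumes "closed Y"
  shows "closed (sol_set Y A b C d)"
proof -
  have "sol_set Y A b C d = Y \<inter> (\<Inter>i. {x. A $ i \<bullet> x = b $ i}) \<inter> (\<Inter>i. {x. C $ i \<bullet> x \<le> d $ i})"
    by (auto simp: sol_set_def vec_eq_iff matrix_vector_mul_component)
  then show ?thesis
    using assms by (auto intro!: closed_hyperplane closed_halfspace_le)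
qed

lemma power2_norm_diff_scaleR:
  fixes u g :: "'a::real_inner"
  shows "(norm (u - c *\<^sub>R g))^2 = (norm u)^2 - 2 * c * (g \<bullet> u) + c^2 * (norm g)^2"
  unfolding power2_norm_eq_inner
  by (simp add: inner_diff_left inner_diff_right inner_commute power2_eq_square algebra_simps)

text \<open>No hypothesis on g is needed: for g = 0 the step length is 0 because x / 0 = 0.\<close>

lemma norm_sq_relaxed_halfspace_step:
  fixes g u :: "'a::real_inner" and \<delta> :: real
  defines "\<alpha> \<equiv> \<delta> * (g \<bullet> u) / (norm g)^2"
  shows "(norm (u - \<alpha> *\<^sub>R g))^2 = (norm u)^2 - \<delta> * (2 - \<delta>) * (g \<bullet> u)^2 / (norm g)^2"
    and "(norm (\<alpha> *\<^sub>R g))^2 = \<delta>^2 * (g \<bullet> u)^2 / (norm g)^2"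
proof -
  show "(norm (u - \<alpha> *\<^sub>R g))^2 = (norm u)^2 - \<delta> * (2 - \<delta>) * (g \<bullet> u)^2 / (norm g)^2"
    unfolding power2_norm_diff_scaleR
    by (cases "g = 0") (simp_all add: \<alpha>_def field_simps power2_eq_square)
  show "(norm (\<alpha> *\<^sub>R g))^2 = \<delta>^2 * (g \<bullet> u)^2 / (norm g)^2"
    by (cases "g = 0") (simp_all add: \<alpha>_def field_simps power2_eq_square)
qed

lemma norm_sq_relaxed_projection_le:
  fixes K :: "'a::euclidean_space set" and v :: 'a
  assumes "closed K" "convex K" "xs \<in> K" "0 \<le> \<beta>"
  defines "p \<equiv> closest_point K v"
  shows "(norm ((1 - \<beta>) *\<^sub>R v + \<beta> *\<^sub>R p - xs))^2
     \<le> (norm (v - xs))^2 - \<beta> * (2 - \<beta>) * (norm (v - p))^2"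
proof -
  have "(v - p) \<bullet> (xs - p) \<le> 0"
    unfolding p_def using closest_point_dot[OF assms(2,1,3)] by simp
  then have "(norm (v - p))^2 \<le> (v - p) \<bullet> (v - xs)"
    by (simp add: power2_norm_eq_inner inner_diff_right)
  then have "\<beta> * (norm (v - p))^2 \<le> \<beta> * ((v - p) \<bullet> (v - xs))"
    using assms(4) by (rule mult_left_mono)
  moreover have "(1 - \<beta>) *\<^sub>R v + \<beta> *\<^sub>R p - xs = (v - xs) - \<beta> *\<^sub>R (v - p)"
    by (simp add: algebra_simps)
  then have "(norm ((1 - \<beta>) *\<^sub>R v + \<beta> *\<^sub>R p - xs))^2
      = (norm (v - xs))^2 - 2 * \<beta> * ((v - p) \<bullet> (v - xs)) + \<beta>^2 * (norm (v - p))^2"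
    by (simp only: power2_norm_diff_scaleR)
  ultimately show ?thesis by (simp add: algebra_simps power2_eq_square)
qed

lemma infdist_eq_set_sq_le_kappa_block:
  fixes A :: "real^'n^'m" and blk :: "'m \<Rightarrow> 'z::finite" and z :: 'z and x xs :: "real^'n"
  assumes "A *v xs = b" "z \<in> set_pmf P"
  defines "r \<equiv> blk_mat A blk z *v (x - xs)"
  defines "g \<equiv> transpose (blk_mat A blk z) *v r"
  shows "(infdist x (eq_set A b blk z))^2 \<le> (kappa_block A blk P)^2 * (((norm r)^2)^2 / (norm g)^2)"
proof -
  let ?M = "blk_mat A blk z"
  let ?\<kappa>z = "spec_norm ?M * spec_norm (pinv ?M)"
  have "eq_set A b blk z = {y. ?M *v y = ?M *v xs}"
    by (simp add: eq_set_blk blk_vec_solution[OF assms(1)])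
  then have "(infdist x (eq_set A b blk z))^2 \<le> ?\<kappa>z^2 * (((norm r)^2)^2 / (norm g)^2)"
    using infdist_solution_set_sq_le[where M="?M" and x=x and xs=xs] by (simp add: r_def g_def)
  moreover have "0 \<le> ?\<kappa>z"
    unfolding spec_norm_def by (intro mult_nonneg_nonneg onorm_pos_le) simp_all
  moreover have "?\<kappa>z \<le> kappa_block A blk P"
    unfolding kappa_block_def using assms(2) by (intro Max_ge) auto
  ultimately show ?thesis
    by (meson mult_right_mono order_trans power_mono divide_nonneg_nonneg zero_le_power2)
qed

lemma infdist_sq_le_via_point:
  fixes x v p :: "'a::real_normed_vector"
  assumes "p \<in> K"
  shows "(infdist x K)^2 \<le> 2 * (norm (x - v))^2 + 2 * (norm (v - p))^2"
proof -
  have "infdist x K \<le> norm (x - v) + norm (v - p)"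
    using infdist_le[OF assms, of x] norm_triangle_ineq[of "x - v" "v - p"] by (simp add: dist_norm)
  then have "(infdist x K)^2 \<le> (norm (x - v) + norm (v - p))^2"
    by (simp add: power_mono infdist_nonneg)
  also have "\<dots> \<le> 2 * (norm (x - v))^2 + 2 * (norm (v - p))^2"
    using sum_squares_bound[of "norm (x - v)" "norm (v - p)"] by (simp add: power2_sum)
  finally show ?thesis .
qed

definition ssp_rate :: "real \<Rightarrow> real \<Rightarrow> real \<Rightarrow> real" where
  "ssp_rate \<delta> \<beta> \<kappa> =
     min (\<delta> * (2 - \<delta>) / (2 * \<kappa>^2)) (min ((2 - \<delta>) / (4 * \<delta>)) (\<beta> * (2 - \<beta>) / 2))"

lemma ssp_rate_nonneg:
  assumes "0 < \<delta>" "\<delta> < 2" "0 < \<beta>" "\<beta> < 2"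
  shows "0 \<le> ssp_rate \<delta> \<beta> \<kappa>"
  using assms by (simp add: ssp_rate_def)

lemma ssp_rate_combination:
  assumes \<delta>: "0 < \<delta>" "\<delta> < 2" and \<beta>: "0 < \<beta>" "\<beta> < 2" and "0 \<le> T" "0 \<le> D"
    and dA: "dA^2 \<le> \<kappa>^2 * T" and dC: "dC^2 \<le> 2 * \<delta>^2 * T + 2 * D"
  shows "ssp_rate \<delta> \<beta> \<kappa> * (dA^2 + dC^2) \<le> \<delta> * (2 - \<delta>) * T + \<beta> * (2 - \<beta>) * D"
proof -
  let ?\<mu> = "ssp_rate \<delta> \<beta> \<kappa>"
  have \<mu>: "0 \<le> ?\<mu>" using \<delta> \<beta> by (rule ssp_rate_nonneg)
  have "?\<mu> * dA^2 \<le> \<delta> * (2 - \<delta>) * T / 2"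
  proof (cases "\<kappa> = 0")
    case True
    then show ?thesis using dA \<delta> \<open>0 \<le> T\<close> by simp
  next
    case False
    have "?\<mu> * dA^2 \<le> \<delta> * (2 - \<delta>) / (2 * \<kappa>^2) * (\<kappa>^2 * T)"
      using \<mu> dA \<delta> by (intro mult_mono) (auto simp: ssp_rate_def)
    then show ?thesis using False by simp
  qed
  moreover have "?\<mu> * dC^2 \<le> \<delta> * (2 - \<delta>) * T / 2 + \<beta> * (2 - \<beta>) * D"
  proof -
    have \<mu>_le: "?\<mu> \<le> (2 - \<delta>) / (4 * \<delta>)" "?\<mu> \<le> \<beta> * (2 - \<beta>) / 2"
      unfolding ssp_rate_def by (rule min.coboundedI2, rule min.cobounded1)
        (rule min.coboundedI2, rule min.cobounded2)
    have "?\<mu> * dC^2 \<le> 2 * \<delta>^2 * T * ?\<mu> + 2 * D * ?\<mu>"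
      using mult_left_mono[OF dC \<mu>] by (simp add: algebra_simps)
    also have "\<dots> \<le> 2 * \<delta>^2 * T * ((2 - \<delta>) / (4 * \<delta>)) + 2 * D * (\<beta> * (2 - \<beta>) / 2)"
      using \<open>0 \<le> T\<close> \<open>0 \<le> D\<close>
      by (intro add_mono mult_left_mono[OF \<mu>_le(1)] mult_left_mono[OF \<mu>_le(2)]) simp_all
    also have "\<dots> = \<delta> * (2 - \<delta>) * T / 2 + \<beta> * (2 - \<beta>) * D"
      using \<delta> by (simp add: field_simps power2_eq_square)
    finally show ?thesis .
  qed
  ultimately show ?thesis by (simp add: distrib_left)
qed

lemma ssp_step_decrease:
  fixes A :: "real^'n^'m" and C :: "real^'n^'p" and blk1 :: "'m \<Rightarrow> 'z::finite" and P1 :: "'z pmf"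
  assumes Y: "closed Y" "convex Y" and xs: "xs \<in> sol_set Y A b C d" and z: "z \<in> set_pmf P1"
    and \<delta>: "0 < \<delta>" "\<delta> < 2" and \<beta>: "0 < \<beta>" "\<beta> < 2"
  shows "(norm (ssp_step \<delta> \<beta> Y A b blk1 C d blk2 x z w - xs))^2 \<le> (norm (x - xs))^2
     - ssp_rate \<delta> \<beta> (kappa_block A blk1 P1)
       * ((infdist x (eq_set A b blk1 z))^2 + (infdist x (ineq_set C d blk2 w))^2)"
proof -
  define M where "M = blk_mat A blk1 z"
  define r where "r = M *v (x - xs)"
  define g where "g = transpose M *v r"
  define \<alpha> where "\<alpha> = \<delta> * (norm r)^2 / (norm g)^2"
  define T where "T = ((norm r)^2)^2 / (norm g)^2"
  define v where "v = x - \<alpha> *\<^sub>R g"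
  define K where "K = ineq_set C d blk2 w"
  define p where "p = closest_point K v"
  define zz where "zz = (1 - \<beta>) *\<^sub>R v + \<beta> *\<^sub>R p"
  have xsY: "xs \<in> Y" and Axs: "A *v xs = b" and xsK: "xs \<in> K"
    using xs by (auto simp: sol_set_def K_def ineq_set_def matrix_vector_mul_component)
  have "blk_mat A blk1 z *v x - blk_vec b blk1 z = r"
    by (simp add: M_def r_def blk_vec_solution[OF Axs] matrix_vector_mult_diff_distrib)
  then have step: "ssp_step \<delta> \<beta> Y A b blk1 C d blk2 x z w = closest_point Y zz"
    by (simp add: ssp_step_def Let_def zz_def p_def K_def v_def \<alpha>_def g_def M_def)
  have g_u: "g \<bullet> (x - xs) = (norm r)^2"
    using inner_transpose_residual[of M "x - xs"] by (simp add: g_def r_def)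
  have v_eq: "v - xs = (x - xs) - \<alpha> *\<^sub>R g" "x - v = \<alpha> *\<^sub>R g" by (simp_all add: v_def)
  have v_xs: "(norm (v - xs))^2 = (norm (x - xs))^2 - \<delta> * (2 - \<delta>) * T"
    and x_v: "(norm (x - v))^2 = \<delta>^2 * T"
    unfolding v_eq using norm_sq_relaxed_halfspace_step[where \<delta>=\<delta> and g=g and u="x - xs"]
    by (simp_all add: g_u \<alpha>_def T_def)
  have zz_xs: "(norm (zz - xs))^2 \<le> (norm (v - xs))^2 - \<beta> * (2 - \<beta>) * (norm (v - p))^2"
    unfolding zz_def p_def K_def
    using norm_sq_relaxed_projection_le[OF closed_convex_ineq_set xsK[unfolded K_def]] \<beta> by simp
  have "norm (closest_point Y zz - xs) \<le> norm (zz - xs)"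
    using closest_point_lipschitz[OF Y(2,1), of zz xs] closest_point_self[OF xsY] xsY
    by (auto simp: dist_norm)
  then have step_zz: "(norm (closest_point Y zz - xs))^2 \<le> (norm (zz - xs))^2"
    by (simp add: power_mono)
  have dA: "(infdist x (eq_set A b blk1 z))^2 \<le> (kappa_block A blk1 P1)^2 * T"
    using infdist_eq_set_sq_le_kappa_block[OF Axs z, of x] by (simp add: T_def g_def r_def M_def)
  have "p \<in> K"
    using closest_point_in_set[OF closed_convex_ineq_set(1)] xsK unfolding p_def K_def
    by (metis empty_iff)
  then have dC: "(infdist x K)^2 \<le> 2 * \<delta>^2 * T + 2 * (norm (v - p))^2"
    using infdist_sq_le_via_point[of p K x v] by (simp add: x_v)
  have "ssp_rate \<delta> \<beta> (kappa_block A blk1 P1)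
        * ((infdist x (eq_set A b blk1 z))^2 + (infdist x K)^2)
      \<le> \<delta> * (2 - \<delta>) * T + \<beta> * (2 - \<beta>) * (norm (v - p))^2"
    using ssp_rate_combination[OF \<delta> \<beta> _ _ dA dC] by (simp add: T_def)
  then show ?thesis
    using step_zz zz_xs v_xs unfolding step K_def by linarith
qed

lemma ssp_step_in: "closed Y \<Longrightarrow> Y \<noteq> {} \<Longrightarrow> ssp_step \<delta> \<beta> Y A b blk1 C d blk2 x z w \<in> Y"
  by (simp add: ssp_step_def Let_def closest_point_in_set)

section \<open>Linear convergence in expectation\<close>

lemma expectation_bind_pmf_nonneg:
  fixes F :: "'b \<Rightarrow> real"
  assumes M: "finite (set_pmf M)" and N: "\<And>x. x \<in> set_pmf M \<Longrightarrow> finite (set_pmf (N x))"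
    and F: "\<And>y. 0 \<le> F y"
  shows "measure_pmf.expectation (bind_pmf M N) F
       = measure_pmf.expectation M (\<lambda>x. measure_pmf.expectation (N x) F)"
proof -
  have NF: "0 \<le> measure_pmf.expectation (N x) F" for x
    by (rule integral_nonneg_AE) (simp add: F)
  have "(\<integral>\<^sup>+y. ennreal (F y) \<partial>bind_pmf M N) = (\<integral>\<^sup>+x. \<integral>\<^sup>+y. ennreal (F y) \<partial>N x \<partial>M)"
    by simp
  also have "\<dots> = (\<integral>\<^sup>+x. ennreal (measure_pmf.expectation (N x) F) \<partial>M)"
    by (intro nn_integral_cong_AE AE_pmfI nn_integral_eq_integral integrable_measure_pmf_finite N)
       (auto simp: F)
  also have "\<dots> = ennreal (measure_pmf.expectation M (\<lambda>x. measure_pmf.expectation (N x) F))"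
    by (intro nn_integral_eq_integral integrable_measure_pmf_finite M) (auto simp: NF)
  finally show ?thesis
    by (simp add: integral_eq_nn_integral F integral_nonneg_AE NF)
qed

lemma expectation_iterate_contraction:
  fixes D :: "nat \<Rightarrow> 'a pmf" and K :: "'a \<Rightarrow> 'a pmf" and F :: "'a \<Rightarrow> real"
  assumes D_Suc: "\<And>k. D (Suc k) = bind_pmf (D k) K"
    and D0: "finite (set_pmf (D 0))" "set_pmf (D 0) \<subseteq> Y"
    and K: "\<And>x. x \<in> Y \<Longrightarrow> finite (set_pmf (K x))" "\<And>x. x \<in> Y \<Longrightarrow> set_pmf (K x) \<subseteq> Y"
    and F: "\<And>x. 0 \<le> F x"
    and contract: "\<And>x. x \<in> Y \<Longrightarrow> measure_pmf.expectation (K x) F \<le> q * F x"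
  shows "measure_pmf.expectation (D k) F \<le> q ^ k * measure_pmf.expectation (D 0) F"
proof -
  have supp: "finite (set_pmf (D k)) \<and> set_pmf (D k) \<subseteq> Y" for k
    by (induction k) (use D0 K in \<open>auto simp: D_Suc\<close>)
  have step: "measure_pmf.expectation (D (Suc k)) F \<le> q * measure_pmf.expectation (D k) F" for k
  proof -
    have "measure_pmf.expectation (D (Suc k)) F
        = measure_pmf.expectation (D k) (\<lambda>x. measure_pmf.expectation (K x) F)"
      unfolding D_Suc using supp K(1) F by (intro expectation_bind_pmf_nonneg) auto
    also have "\<dots> \<le> measure_pmf.expectation (D k) (\<lambda>x. q * F x)"
      using supp contract by (intro integral_mono_AE integrable_measure_pmf_finite AE_pmfI) auto
    also have "\<dots> = q * measure_pmf.expectation (D k) F" by simp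
    finally show ?thesis .
  qed
  show ?thesis
  proof (cases "0 \<le> q")
    case True
    show ?thesis
    proof (induction k)
      case (Suc k)
      have "measure_pmf.expectation (D (Suc k)) F \<le> q * measure_pmf.expectation (D k) F"
        by (rule step)
      also have "\<dots> \<le> q * (q ^ k * measure_pmf.expectation (D 0) F)"
        using Suc True by (rule mult_left_mono)
      finally show ?case by simp
    qed simp
  next
    case False
    \<comment> \<open>a negative contraction factor is only possible if F vanishes on Y\<close>
    have "F x = 0" if "x \<in> Y" for x
    proof -
      have "0 \<le> measure_pmf.expectation (K x) F" by (rule integral_nonneg_AE) (simp add: F)
      then have "0 \<le> q * F x" using contract[OF that] by linarith
      then show ?thesis using False F[of x] by (simp add: zero_le_mult_iff)
    qed
    then have "measure_pmf.expectation (D k) F = 0" for k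
      using supp[of k] by (auto intro!: integral_eq_zero_AE AE_pmfI)
    then show ?thesis by simp
  qed
qed

lemma ssp_expected_decrease:
  fixes A :: "real^'n^'m" and b :: "real^'m" and C :: "real^'n^'p" and d :: "real^'p"
    and Y :: "(real^'n) set" and blk1 :: "'m \<Rightarrow> 'z::finite" and blk2 :: "'p \<Rightarrow> 'w::finite"
  defines "S \<equiv> sol_set Y A b C d"
  assumes Y: "closed Y" "convex Y" and S: "S \<noteq> {}"
    and hoffman: "(infdist x S)^2 \<le> c * measure_pmf.expectation (pair_pmf P1 P2)
       (\<lambda>(z, w). (infdist x (eq_set A b blk1 z))^2 + (infdist x (ineq_set C d blk2 w))^2)"
    and c: "0 < c" and \<delta>: "0 < \<delta>" "\<delta> < 2" and \<beta>: "0 < \<beta>" "\<beta> < 2"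
  shows "measure_pmf.expectation (pair_pmf P1 P2)
           (\<lambda>(z, w). (infdist (ssp_step \<delta> \<beta> Y A b blk1 C d blk2 x z w) S)^2)
       \<le> (1 - (1 / c) * ssp_rate \<delta> \<beta> (kappa_block A blk1 P1)) * (infdist x S)^2"
proof -
  define \<mu> where "\<mu> = ssp_rate \<delta> \<beta> (kappa_block A blk1 P1)"
  define H where
    "H = (\<lambda>(z, w). (infdist x (eq_set A b blk1 z))^2 + (infdist x (ineq_set C d blk2 w))^2)"
  define xs where "xs = closest_point S x"
  have "closed S" unfolding S_def using Y(1) by (rule closed_sol_set)
  then have xs: "xs \<in> S" and dist_x: "infdist x S = norm (x - xs)"
    using S by (simp_all add: xs_def closest_point_in_set infdist_eq_setdist setdist_closest_point
        dist_norm)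
  have "(infdist (ssp_step \<delta> \<beta> Y A b blk1 C d blk2 x z w) S)^2 \<le> (infdist x S)^2 - \<mu> * H (z, w)"
    if "z \<in> set_pmf P1" for z w
  proof -
    have "infdist (ssp_step \<delta> \<beta> Y A b blk1 C d blk2 x z w) S
        \<le> norm (ssp_step \<delta> \<beta> Y A b blk1 C d blk2 x z w - xs)"
      using infdist_le[OF xs] by (simp add: dist_norm)
    then have "(infdist (ssp_step \<delta> \<beta> Y A b blk1 C d blk2 x z w) S)^2
        \<le> (norm (ssp_step \<delta> \<beta> Y A b blk1 C d blk2 x z w - xs))^2"
      by (simp add: power_mono infdist_nonneg)
    also have "\<dots> \<le> (infdist x S)^2 - \<mu> * H (z, w)"
      using ssp_step_decrease[OF Y xs[unfolded S_def] that \<delta> \<beta>]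
      by (simp add: dist_x \<mu>_def H_def)
    finally show ?thesis .
  qed
  then have "measure_pmf.expectation (pair_pmf P1 P2)
           (\<lambda>(z, w). (infdist (ssp_step \<delta> \<beta> Y A b blk1 C d blk2 x z w) S)^2)
      \<le> measure_pmf.expectation (pair_pmf P1 P2) (\<lambda>y. (infdist x S)^2 - \<mu> * H y)"
    by (intro integral_mono_AE integrable_measure_pmf_finite AE_pmfI) auto
  also have "\<dots> = (infdist x S)^2 - \<mu> * measure_pmf.expectation (pair_pmf P1 P2) H"
    by (simp add: integrable_measure_pmf_finite)
  also have "\<dots> \<le> (infdist x S)^2 - \<mu> * ((infdist x S)^2 / c)"
    using hoffman c ssp_rate_nonneg[OF \<delta> \<beta>]
    by (intro diff_left_mono mult_left_mono) (simp_all add: \<mu>_def H_def field_simps)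
  finally show ?thesis by (simp add: \<mu>_def algebra_simps)
qed

theorem theorem7:
  fixes A :: "real^'n^'m" and b :: "real^'m" and C :: "real^'n^'p" and d :: "real^'p"
    and Y :: "(real^'n) set"
    and blk1 :: "'m \<Rightarrow> 'z::finite" and blk2 :: "'p \<Rightarrow> 'w::finite"
    and P1 :: "'z pmf" and P2 :: "'w pmf"
    and c \<delta> \<beta> :: real and x0 :: "real^'n" and k :: nat
  assumes Ypoly: "polyhedron Y"
    and nonempty: "sol_set Y A b C d \<noteq> {}"
    and c_pos: "0 < c"
    and hoffman: "\<forall>u \<in> Y. (infdist u (sol_set Y A b C d))^2 \<le>
        c * measure_pmf.expectation (pair_pmf P1 P2)
              (\<lambda>(z, w). (infdist u (eq_set A b blk1 z))^2 + (infdist u (ineq_set C d blk2 w))^2)"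
    and delta: "0 < \<delta>" "\<delta> < 2"
    and beta: "0 < \<beta>" "\<beta> < 2"
    and x0: "x0 \<in> Y"
  shows "measure_pmf.expectation (ssp_dist \<delta> \<beta> Y A b blk1 P1 C d blk2 P2 x0 k)
            (\<lambda>x. (infdist x (sol_set Y A b C d))^2)
       \<le> (1 - (1 / c) * min (\<delta> * (2 - \<delta>) / (2 * (kappa_block A blk1 P1)^2))
                         (min ((2 - \<delta>) / (4 * \<delta>)) (\<beta> * (2 - \<beta>) / 2))) ^ k
          * (infdist x0 (sol_set Y A b C d))^2"
proof -
  have Y: "closed Y" "convex Y"
    using Ypoly by (simp_all add: polyhedron_imp_closed polyhedron_imp_convex)
  let ?K = "\<lambda>x. map_pmf (\<lambda>(z, w). ssp_step \<delta> \<beta> Y A b blk1 C d blk2 x z w) (pair_pmf P1 P2)"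
  have "measure_pmf.expectation (ssp_dist \<delta> \<beta> Y A b blk1 P1 C d blk2 P2 x0 k)
          (\<lambda>x. (infdist x (sol_set Y A b C d))^2)
      \<le> (1 - (1 / c) * ssp_rate \<delta> \<beta> (kappa_block A blk1 P1)) ^ k
        * measure_pmf.expectation (ssp_dist \<delta> \<beta> Y A b blk1 P1 C d blk2 P2 x0 0)
            (\<lambda>x. (infdist x (sol_set Y A b C d))^2)"
  proof (rule expectation_iterate_contraction[where K = ?K and Y = Y])
    show "set_pmf (?K x) \<subseteq> Y" for x
      using ssp_step_in[OF Y(1)] x0 by force
    show "measure_pmf.expectation (?K x) (\<lambda>x. (infdist x (sol_set Y A b C d))^2)
        \<le> (1 - (1 / c) * ssp_rate \<delta> \<beta> (kappa_block A blk1 P1)) * (infdist x (sol_set Y A b C d))^2"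
      if "x \<in> Y" for x
      using ssp_expected_decrease[OF Y nonempty hoffman[rule_format, OF that] c_pos delta beta]
      by (simp add: case_prod_beta')
  qed (use x0 in simp_all)
  then show ?thesis by (simp add: ssp_rate_def)
qed

end
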